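(* Let $(t_j^i)_{0\le j\le i}$ be real numbers and let $h_{j,k}^i$ ($0\le k\le i$, $0\le j\le i-k$) be defined by $h_{j,0}^i=t_j^i$ and $h_{j,k}^i=h_{j,k-1}^{i-1}+h_{j,k-1}^{i}+h_{j+1,k-1}^{i}$ for $k\ge 1$. Then for any $0\leq k \leq i$, $0\leq j \leq i-k$, $$h^i_{j,k}=\sum_{r=0}^{k} \sum_{s=0}^{r} \binom{k}{s,\,k-r,\,r-s} t_{j+s}^{i-k+r}.$$
   Context: For non-negative integers $p,q,r$ with $p+q+r=n$, the tetrahedron trinomial coefficient is $\binom{n}{p,q,r}=\frac{n!}{p!\,q!\,r!}$. The numbers $t_j^i$ ($i,j\in\mathbb N$, $0\le j\le i$) form an arithmetical triangle $\mathcal T$ (rows $i$, columns $j$), and the $h_{j,k}^i$ form a tetrahedron $\mathcal H$ with face $\mathcal T$. *)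

theory Defs
  imports Complex_Main
begin

definition trinom :: "nat \<Rightarrow> nat \<Rightarrow> nat \<Rightarrow> real" where
  "trinom p q r = fact (p + q + r) / (fact p * fact q * fact r)"

end

theory Submission
  imports Defs
begin

text \<open>Since the trinomial coefficient factors as \<open>(k choose r) * (r choose s)\<close>, the claimed
  closed form is an iterated binomial transform: first in the column index \<open>j\<close>, then in the row
  index \<open>i\<close>. Each binomial transform obeys Pascal's rule, and combining the two Pascal rules
  gives exactly the three-term recursion defining \<open>h\<close>; induction on \<open>k\<close> finishes the proof.\<close>

lemma trinom_eq_choose_mult_choose:
  assumes "s \<le> r" "r \<le> k"
  shows "trinom s (k - r) (r - s) = real (k choose r) * real (r choose s)"
proof -
  have sum_eq: "s + (k - r) + (r - s) = k" using assms by simp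
  have "real (k choose r) * real (r choose s)
      = fact k / (fact r * fact (k - r)) * (fact r / (fact s * fact (r - s)))"
    using assms by (simp add: binomial_fact)
  also have "\<dots> = fact k / (fact s * fact (k - r) * fact (r - s))"
    by (simp add: field_simps)
  finally show ?thesis unfolding trinom_def sum_eq by simp
qed

lemma sum_choose_Suc_split:
  fixes f :: "nat \<Rightarrow> 'a::comm_semiring_1"
  shows "(\<Sum>r\<le>Suc k. of_nat (Suc k choose r) * f r)
       = (\<Sum>r\<le>k. of_nat (k choose r) * f r) + (\<Sum>r\<le>k. of_nat (k choose r) * f (Suc r))"
proof -
  have "(\<Sum>r\<le>Suc k. of_nat (Suc k choose r) * f r)
      = f 0 + (\<Sum>r\<le>k. (of_nat (k choose r) + of_nat (k choose Suc r)) * f (Suc r))"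
    by (simp add: sum.atMost_Suc_shift del: sum.atMost_Suc)
  also have "\<dots> = (f 0 + (\<Sum>r\<le>k. of_nat (k choose Suc r) * f (Suc r)))
                 + (\<Sum>r\<le>k. of_nat (k choose r) * f (Suc r))"
    by (simp add: algebra_simps sum.distrib)
  also have "f 0 + (\<Sum>r\<le>k. of_nat (k choose Suc r) * f (Suc r))
           = (\<Sum>r\<le>Suc k. of_nat (k choose r) * f r)"
    by (simp add: sum.atMost_Suc_shift del: sum.atMost_Suc)
  also have "\<dots> = (\<Sum>r\<le>k. of_nat (k choose r) * f r)" by (simp add: binomial_eq_0)
  finally show ?thesis .
qed

definition column_binom_sum :: "(nat \<Rightarrow> nat \<Rightarrow> real) \<Rightarrow> nat \<Rightarrow> nat \<Rightarrow> nat \<Rightarrow> real" where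
  "column_binom_sum t r i j = (\<Sum>s\<le>r. real (r choose s) * t i (j + s))"

lemma column_binom_sum_Suc:
  "column_binom_sum t (Suc r) i j = column_binom_sum t r i j + column_binom_sum t r i (Suc j)"
  unfolding column_binom_sum_def using sum_choose_Suc_split[of r "\<lambda>s. t i (j + s)"] by simp

definition tetra_sum :: "(nat \<Rightarrow> nat \<Rightarrow> real) \<Rightarrow> nat \<Rightarrow> nat \<Rightarrow> nat \<Rightarrow> real" where
  "tetra_sum t k i j = (\<Sum>r\<le>k. real (k choose r) * column_binom_sum t r (i - k + r) j)"

lemma tetra_sum_0: "tetra_sum t 0 i j = t i j"
  by (simp add: tetra_sum_def column_binom_sum_def)

lemma tetra_sum_Suc:
  assumes "Suc k \<le> i"
  shows "tetra_sum t (Suc k) i j = tetra_sum t k (i - 1) j + tetra_sum t k i j + tetra_sum t k i (Suc j)"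
proof -
  have row_shift: "\<And>r. i - Suc k + Suc r = i - k + r" using assms by simp
  have "tetra_sum t (Suc k) i j
      = (\<Sum>r\<le>k. real (k choose r) * column_binom_sum t r (i - 1 - k + r) j)
      + (\<Sum>r\<le>k. real (k choose r) * column_binom_sum t (Suc r) (i - Suc k + Suc r) j)"
    unfolding tetra_sum_def sum_choose_Suc_split by (simp add: diff_diff_left)
  also have "\<dots> = tetra_sum t k (i - 1) j + (tetra_sum t k i j + tetra_sum t k i (Suc j))"
    unfolding tetra_sum_def column_binom_sum_Suc row_shift distrib_left sum.distrib ..
  finally show ?thesis by simp
qed

lemma tetra_sum_eq_trinom_sum:
  "tetra_sum t k i j = (\<Sum>r = 0..k. \<Sum>s = 0..r. trinom s (k - r) (r - s) * t (i - k + r) (j + s))"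
  unfolding tetra_sum_def column_binom_sum_def atMost_atLeast0
  by (intro sum.cong refl)
    (auto simp: sum_distrib_left trinom_eq_choose_mult_choose mult.assoc intro!: sum.cong)

theorem theorem1:
  fixes t :: "nat \<Rightarrow> nat \<Rightarrow> real" and h :: "nat \<Rightarrow> nat \<Rightarrow> nat \<Rightarrow> real"
  assumes base: "\<And>i j. j \<le> i \<Longrightarrow> h i j 0 = t i j"
    and rec: "\<And>i j k. 1 \<le> k \<Longrightarrow> k \<le> i \<Longrightarrow> j \<le> i - k \<Longrightarrow>
                h i j k = h (i - 1) j (k - 1) + h i j (k - 1) + h i (j + 1) (k - 1)"
    and "k \<le> i" and "j \<le> i - k"
  shows "h i j k = (\<Sum>r = 0..k. \<Sum>s = 0..r. trinom s (k - r) (r - s) * t (i - k + r) (j + s))"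
proof -
  have "h i j k = tetra_sum t k i j" using assms(3,4)
  proof (induction k arbitrary: i j)
    case 0
    then show ?case using base by (simp add: tetra_sum_0)
  next
    case (Suc k)
    have "h i j (Suc k) = h (i - 1) j k + h i j k + h i (j + 1) k"
      using rec[of "Suc k" i j] Suc.prems by simp
    also have "\<dots> = tetra_sum t k (i - 1) j + tetra_sum t k i j + tetra_sum t k i (Suc j)"
      using Suc.prems by (simp add: Suc.IH)
    also have "\<dots> = tetra_sum t (Suc k) i j" using tetra_sum_Suc Suc.prems by simp
    finally show ?case .
  qed
  then show ?thesis by (simp add: tetra_sum_eq_trinom_sum)
qed

end
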